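(* Let $G$ and $H$ be finite AC-groups such that $B_G(t)=B_H(t)$. Then $k(G)=k(H)$, where $k(\cdot)$ denotes the number of conjugacy classes.
   Context: A finite group $G$ is an AC-group if the centralizer of every non-central element is abelian. For a finite group $G$ and $n\ge0$, let $G^{(n)}\subseteq G^n$ be the set of $n$-tuples of pairwise commuting elements, on which $G$ acts by simultaneous conjugation; let $\beta_{G,n}$ be the number of orbits and $B_G(t)=\sum_{n\ge0}\beta_{G,n}t^n$. *)

theory Defs
  imports "HOL-Algebra.Group_Action" "HOL-Computational_Algebra.Formal_Power_Series"
begin

definition grp_center :: "('a, 'b) monoid_scheme \<Rightarrow> 'a set" where
  "grp_center G = {z \<in> carrier G. \<forall>x \<in> carrier G. z \<otimes>\<^bsub>G\<^esub> x = x \<otimes>\<^bsub>G\<^esub> z}"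

definition grp_centralizer :: "('a, 'b) monoid_scheme \<Rightarrow> 'a \<Rightarrow> 'a set" where
  "grp_centralizer G x = {y \<in> carrier G. y \<otimes>\<^bsub>G\<^esub> x = x \<otimes>\<^bsub>G\<^esub> y}"

definition AC_group :: "('a, 'b) monoid_scheme \<Rightarrow> bool" where
  "AC_group G \<longleftrightarrow> group G \<and>
     (\<forall>x \<in> carrier G. x \<notin> grp_center G \<longrightarrow>
        (\<forall>y \<in> grp_centralizer G x. \<forall>z \<in> grp_centralizer G x.
           y \<otimes>\<^bsub>G\<^esub> z = z \<otimes>\<^bsub>G\<^esub> y))"

definition conj_act :: "('a, 'b) monoid_scheme \<Rightarrow> 'a \<Rightarrow> 'a \<Rightarrow> 'a" where
  "conj_act G g x = g \<otimes>\<^bsub>G\<^esub> x \<otimes>\<^bsub>G\<^esub> inv\<^bsub>G\<^esub> g"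

definition commuting_tuples :: "('a, 'b) monoid_scheme \<Rightarrow> nat \<Rightarrow> 'a list set" where
  "commuting_tuples G n = {xs. length xs = n \<and> set xs \<subseteq> carrier G \<and>
      (\<forall>i < n. \<forall>j < n. xs ! i \<otimes>\<^bsub>G\<^esub> xs ! j = xs ! j \<otimes>\<^bsub>G\<^esub> xs ! i)}"

definition beta :: "('a, 'b) monoid_scheme \<Rightarrow> nat \<Rightarrow> nat" where
  "beta G n = card (orbits G (commuting_tuples G n) (\<lambda>g xs. map (conj_act G g) xs))"

definition B_series :: "('a, 'b) monoid_scheme \<Rightarrow> int fps" where
  "B_series G = Abs_fps (\<lambda>n. int (beta G n))"

definition num_conj_classes :: "('a, 'b) monoid_scheme \<Rightarrow> nat" where
  "num_conj_classes G = card (orbits G (carrier G) (conj_act G))"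

end

theory Submission
  imports Defs
begin

text \<open>One-element tuples are automatically pairwise commuting, so the coefficient
  \<open>\<beta>\<^sub>G\<^sub>,\<^sub>1\<close> of \<open>t\<close> in \<open>B\<^sub>G(t)\<close> counts the conjugacy classes of \<open>G\<close>.
  Hence \<open>k(G)\<close> is determined by \<open>B\<^sub>G(t)\<close> for every finite group.\<close>

lemma orbit_map_singleton:
  "orbit G (\<lambda>g. map (\<phi> g)) [x] = (\<lambda>y. [y]) ` orbit G \<phi> x"
  unfolding orbit_def by auto

lemma orbits_map_singletons:
  "orbits G ((\<lambda>x. [x]) ` E) (\<lambda>g. map (\<phi> g)) = (\<lambda>S. (\<lambda>y. [y]) ` S) ` orbits G E \<phi>"
  unfolding orbits_def Setcompr_eq_image image_image orbit_map_singleton ..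

lemma card_orbits_map_singletons:
  "card (orbits G ((\<lambda>x. [x]) ` E) (\<lambda>g. map (\<phi> g))) = card (orbits G E \<phi>)"
proof -
  have "inj (\<lambda>S. (\<lambda>y. [y]) ` S)"
    by (rule injI) (simp add: inj_image_eq_iff inj_def)
  then show ?thesis
    unfolding orbits_map_singletons by (metis card_image inj_on_subset subset_UNIV)
qed

lemma commuting_tuples_one: "commuting_tuples G 1 = (\<lambda>x. [x]) ` carrier G"
  unfolding commuting_tuples_def by (auto simp: length_Suc_conv)

lemma beta_one: "beta G 1 = num_conj_classes G"
  unfolding beta_def num_conj_classes_def commuting_tuples_one
  by (rule card_orbits_map_singletons)

theorem lemma6p4:
  fixes G :: "('a, 'c) monoid_scheme" and H :: "('b, 'd) monoid_scheme"
  assumes "group G" and "finite (carrier G)" and "AC_group G"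
      and "group H" and "finite (carrier H)" and "AC_group H"
      and "B_series G = B_series H"
  shows "num_conj_classes G = num_conj_classes H"
proof -
  have "beta G 1 = beta H 1"
    using arg_cong [OF assms(7), of "\<lambda>f. fps_nth f 1"] by (simp add: B_series_def)
  then show ?thesis
    unfolding beta_one .
qed

end
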